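(* Let $\alpha\in\mathbb{N}=\{0,1,2,\dots\}$. (i) If $m$ is a positive odd integer with $m>6\alpha+2$ and $\mathbb{S}=\langle 6,6\alpha+2,m\rangle$, then $Betti(\mathbb{S})=\{18\alpha+6,\,2m\}$. (ii) If $n\in\mathbb{N}$ with $3\nmid n$ and $n>6\alpha+3$ and $\mathbb{S}=\langle 6,6\alpha+3,n\rangle$, then $Betti(\mathbb{S})=\{12\alpha+6,\,3n\}$. (iii) If $p$ is a positive odd integer with $p>6\alpha+4$ and $\mathbb{S}=\langle 6,6\alpha+4,p\rangle$, then $Betti(\mathbb{S})=\{18\alpha+12,\,2p\}$.
   Context: $\mathbb{N}$ denotes the set of nonnegative integers. For positive integers $a_1,\dots,a_e$ with $\gcd=1$, $\langle a_1,\dots,a_e\rangle=\{\lambda_1a_1+\dots+\lambda_ea_e:\lambda_i\in\mathbb{N}\}$. For $a\in\mathbb{S}$, $Z(a)=\{(\eta_1,\dots,\eta_e)\in\mathbb{N}^e:\sum\eta_ia_i=a\}$. For $x,y\in\mathbb{N}^e$, $\gcd\{x,y\}$ is the componentwise minimum. For $a\in\mathbb{S}\setminus\{0\}$, $\nabla_a$ is the graph with vertex set $Z(a)$, with $x,y$ adjacent iff $\gcd\{x,y\}\neq0$; $a$ is a Betti element if $\nabla_a$ is disconnected, and $Betti(\mathbb{S})$ is the set of Betti elements. *)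

theory Defs
  imports Main
begin

definition lin_comb :: "nat list \<Rightarrow> nat list \<Rightarrow> nat" where
  "lin_comb gens x = (\<Sum>i<length gens. x ! i * gens ! i)"

definition semigroup_gen :: "nat list \<Rightarrow> nat set" where
  "semigroup_gen gens = {s. \<exists>x. length x = length gens \<and> lin_comb gens x = s}"

definition factorizations :: "nat list \<Rightarrow> nat \<Rightarrow> nat list set" where
  "factorizations gens a = {x. length x = length gens \<and> lin_comb gens x = a}"

definition gcd_vec :: "nat list \<Rightarrow> nat list \<Rightarrow> nat list" where
  "gcd_vec x y = map2 min x y"

definition nabla_adj :: "nat list \<Rightarrow> nat \<Rightarrow> nat list \<Rightarrow> nat list \<Rightarrow> bool" where
  "nabla_adj gens a x y \<longleftrightarrow> x \<in> factorizations gens a \<and> y \<in> factorizations gens a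
     \<and> gcd_vec x y \<noteq> replicate (length gens) 0"

definition nabla_connected :: "nat list \<Rightarrow> nat \<Rightarrow> bool" where
  "nabla_connected gens a \<longleftrightarrow>
     (\<forall>x\<in>factorizations gens a. \<forall>y\<in>factorizations gens a. (nabla_adj gens a)\<^sup>*\<^sup>* x y)"

definition Betti :: "nat list \<Rightarrow> nat set" where
  "Betti gens = {a \<in> semigroup_gen gens - {0}. \<not> nabla_connected gens a}"

end

theory Submission
  imports Defs "HOL-Number_Theory.Cong"
begin

(*
  Write the semigroup as <p q, p k, b> with coprime k q, coprime b p and b > (q - 1) k; the theorem
  is the case (p, q) = (2, 3), k = 3 alpha + 1 or 3 alpha + 2, and the case (p, q) = (3, 2),
  k = 2 alpha + 1. Two trades act on factorizations: q (p k) = k (p q), and p b = u (p q) + v (p k),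
  which exists because b is large. Trading keeps a factorization in its component of the graph
  unless it consumes the whole factorization, so every element other than q p k and p b is
  connected to a normal form with second coordinate below q and third below p. These normal forms
  are pairwise distinct modulo p q (reduce modulo p, then modulo q), hence unique, and the graph is
  connected. Conversely, divisibility by p and q shows that the pure factorizations (0, q, 0) of
  q p k and (0, 0, p) of p b have no neighbours, so these two elements are Betti.
*)

lemma lin_comb_3: "lin_comb [a1, a2, a3] [x1, x2, x3] = x1*a1 + x2*a2 + x3*a3"
  by (simp add: lin_comb_def eval_nat_numeral lessThan_Suc)

lemma factorizations_3:
  "x \<in> factorizations [a1, a2, a3] a \<longleftrightarrow>
     (\<exists>x1 x2 x3. x = [x1, x2, x3] \<and> x1*a1 + x2*a2 + x3*a3 = a)"
  by (auto simp: factorizations_def length_Suc_conv numeral_3_eq_3 lin_comb_3)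

lemma nabla_adj_3:
  "nabla_adj [a1, a2, a3] a [x1, x2, x3] [y1, y2, y3] \<longleftrightarrow>
     x1*a1 + x2*a2 + x3*a3 = a \<and> y1*a1 + y2*a2 + y3*a3 = a \<and>
     (x1 \<noteq> 0 \<and> y1 \<noteq> 0 \<or> x2 \<noteq> 0 \<and> y2 \<noteq> 0 \<or> x3 \<noteq> 0 \<and> y3 \<noteq> 0)"
  by (auto simp: nabla_adj_def factorizations_3 gcd_vec_def eval_nat_numeral)

lemma symp_nabla_adj: "symp (nabla_adj gens a)"
proof -
  have "gcd_vec x y = gcd_vec y x" for x y
    unfolding gcd_vec_def by (induction x y rule: list_induct2') (auto simp: min.commute)
  then show ?thesis
    by (auto intro!: sympI simp: nabla_adj_def)
qed

lemma semigroup_gen_iff_factorization: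
  "a \<in> semigroup_gen gens \<longleftrightarrow> factorizations gens a \<noteq> {}"
  by (auto simp: semigroup_gen_def factorizations_def)

lemma Betti_if_isolated:
  assumes x: "x \<in> factorizations gens a" and y: "y \<in> factorizations gens a" "y \<noteq> x"
    and "a \<noteq> 0" and isolated: "\<And>z. nabla_adj gens a x z \<Longrightarrow> z = x"
  shows "a \<in> Betti gens"
proof -
  have "z = x" if "(nabla_adj gens a)\<^sup>*\<^sup>* x z" for z
    using that by (induction rule: rtranclp_induct) (auto dest: isolated)
  then have "\<not> nabla_connected gens a"
    using x y by (auto simp: nabla_connected_def)
  then show ?thesis
    using x \<open>a \<noteq> 0\<close> by (auto simp: Betti_def semigroup_gen_iff_factorization)
qed

locale two_relation_semigroup =
  fixes a1 a2 a3 c d e u v :: nat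
  assumes rel2: "c*a1 = d*a2"
    and rel3: "e*a3 = u*a1 + v*a2"
    and d_pos: "0 < d" and e_pos: "0 < e" and a1_pos: "0 < a1"
    and normal_forms_incongruent: "\<And>x2 x3 y2 y3. x2 < d \<Longrightarrow> x3 < e \<Longrightarrow> y2 < d \<Longrightarrow> y3 < e \<Longrightarrow>
      [x2*a2 + x3*a3 = y2*a2 + y3*a3] (mod a1) \<Longrightarrow> x2 = y2 \<and> x3 = y3"
begin

abbreviation nabla :: "nat \<Rightarrow> nat list \<Rightarrow> nat list \<Rightarrow> bool"
  where "nabla \<equiv> nabla_adj [a1, a2, a3]"

lemma normal_form_unique:
  assumes "x2 < d" "x3 < e" "y2 < d" "y3 < e"
    and eq: "x1*a1 + x2*a2 + x3*a3 = y1*a1 + y2*a2 + y3*a3"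
  shows "x1 = y1 \<and> x2 = y2 \<and> x3 = y3"
proof -
  have "[x2*a2 + x3*a3 = y2*a2 + y3*a3] (mod a1)"
    using arg_cong[OF eq, of "\<lambda>t. t mod a1"] by (simp add: cong_def add.assoc)
  then have "x2 = y2 \<and> x3 = y3"
    using normal_forms_incongruent assms(1-4) by blast
  with eq a1_pos show ?thesis
    by simp
qed

lemma nabla_reach_second_below:
  assumes "x1*a1 + x2*a2 + x3*a3 = a" and "a \<noteq> d*a2"
  shows "\<exists>n1 n2. n2 < d \<and> n1*a1 + n2*a2 + x3*a3 = a \<and> (nabla a)\<^sup>*\<^sup>* [x1, x2, x3] [n1, n2, x3]"
  using assms(1)
proof (induction x2 arbitrary: x1 rule: less_induct)
  case (less x2)
  show ?case
  proof (cases "x2 < d")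
    case True
    with less.prems show ?thesis
      by blast
  next
    case False
    then obtain t where t: "x2 = d + t"
      using le_Suc_ex by (metis not_less)
    \<comment> \<open>both factorizations contain [x1, t, x3], which is nonzero since a \<noteq> d*a2\<close>
    have traded: "(x1 + c)*a1 + t*a2 + x3*a3 = a"
      using less.prems rel2 by (simp add: t algebra_simps)
    have "nabla a [x1, x2, x3] [x1 + c, t, x3]"
      using less.prems traded assms(2) by (auto simp: nabla_adj_3 t)
    moreover obtain n1 n2 where
      "n2 < d" "n1*a1 + n2*a2 + x3*a3 = a" "(nabla a)\<^sup>*\<^sup>* [x1 + c, t, x3] [n1, n2, x3]"
      using less.IH[OF _ traded] t d_pos by auto
    ultimately show ?thesis
      by (blast intro: converse_rtranclp_into_rtranclp)
  qed
qed

lemma nabla_reach_normal_form: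
  assumes "x1*a1 + x2*a2 + x3*a3 = a" and "a \<noteq> d*a2" and "a \<noteq> e*a3"
  shows "\<exists>n1 n2 n3. n2 < d \<and> n3 < e \<and> n1*a1 + n2*a2 + n3*a3 = a \<and>
           (nabla a)\<^sup>*\<^sup>* [x1, x2, x3] [n1, n2, n3]"
  using assms(1)
proof (induction x3 arbitrary: x1 x2 rule: less_induct)
  case (less x3)
  show ?case
  proof (cases "x3 < e")
    case True
    with nabla_reach_second_below[OF less.prems assms(2)] show ?thesis
      by blast
  next
    case False
    then obtain t where t: "x3 = e + t"
      using le_Suc_ex by (metis not_less)
    have traded: "(x1 + u)*a1 + (x2 + v)*a2 + t*a3 = a"
      using less.prems rel3 by (simp add: t algebra_simps)
    have "nabla a [x1, x2, x3] [x1 + u, x2 + v, t]"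
      using less.prems traded assms(3) by (auto simp: nabla_adj_3 t)
    moreover obtain n1 n2 n3 where "n2 < d" "n3 < e" "n1*a1 + n2*a2 + n3*a3 = a"
      "(nabla a)\<^sup>*\<^sup>* [x1 + u, x2 + v, t] [n1, n2, n3]"
      using less.IH[OF _ traded] t e_pos by auto
    ultimately show ?thesis
      by (blast intro: converse_rtranclp_into_rtranclp)
  qed
qed

lemma nabla_connected_if:
  assumes "a \<noteq> d*a2" and "a \<noteq> e*a3"
  shows "nabla_connected [a1, a2, a3] a"
  unfolding nabla_connected_def
proof (intro ballI)
  fix x y
  assume "x \<in> factorizations [a1, a2, a3] a" "y \<in> factorizations [a1, a2, a3] a"
  then obtain x1 x2 x3 y1 y2 y3 where
    x: "x = [x1, x2, x3]" "x1*a1 + x2*a2 + x3*a3 = a" and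
    y: "y = [y1, y2, y3]" "y1*a1 + y2*a2 + y3*a3 = a"
    by (auto simp: factorizations_3)
  obtain n1 n2 n3 where n: "n2 < d" "n3 < e" "n1*a1 + n2*a2 + n3*a3 = a"
    "(nabla a)\<^sup>*\<^sup>* x [n1, n2, n3]"
    using nabla_reach_normal_form[OF x(2) assms] x(1) by blast
  obtain m1 m2 m3 where m: "m2 < d" "m3 < e" "m1*a1 + m2*a2 + m3*a3 = a"
    "(nabla a)\<^sup>*\<^sup>* y [m1, m2, m3]"
    using nabla_reach_normal_form[OF y(2) assms] y(1) by blast
  have "[n1, n2, n3] = [m1, m2, m3]"
    using normal_form_unique[OF n(1,2) m(1,2), of n1 m1] n(3) m(3) by simp
  then show "(nabla a)\<^sup>*\<^sup>* x y"
    using n(4) m(4) sympD[OF symp_rtranclp[OF symp_nabla_adj]] by (metis rtranclp_trans)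
qed

lemma Betti_eq:
  assumes "0 < a2" "0 < a3"
    and isolated2: "\<And>y1 y2 y3. y1*a1 + y2*a2 + y3*a3 = d*a2 \<Longrightarrow> 0 < y2 \<Longrightarrow> y1 = 0 \<and> y2 = d \<and> y3 = 0"
    and isolated3: "\<And>y1 y2 y3. y1*a1 + y2*a2 + y3*a3 = e*a3 \<Longrightarrow> 0 < y3 \<Longrightarrow> y1 = 0 \<and> y2 = 0 \<and> y3 = e"
  shows "Betti [a1, a2, a3] = {d*a2, e*a3}"
proof (intro equalityI subsetI)
  show "b \<in> {d*a2, e*a3}" if "b \<in> Betti [a1, a2, a3]" for b
    using that nabla_connected_if by (auto simp: Betti_def)
next
  have "d*a2 \<in> Betti [a1, a2, a3]"
  proof (rule Betti_if_isolated)
    show "[0, d, 0] \<in> factorizations [a1, a2, a3] (d*a2)" "[c, 0, 0] \<in> factorizations [a1, a2, a3] (d*a2)"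
      using rel2 by (auto simp: factorizations_3)
    show "z = [0, d, 0]" if adj: "nabla (d*a2) [0, d, 0] z" for z
    proof -
      obtain z1 z2 z3 where "z = [z1, z2, z3]"
        using adj by (auto simp: nabla_adj_def factorizations_3)
      with adj isolated2 show ?thesis
        by (auto simp: nabla_adj_3)
    qed
  qed (use d_pos \<open>0 < a2\<close> in auto)
  moreover have "e*a3 \<in> Betti [a1, a2, a3]"
  proof (rule Betti_if_isolated)
    show "[0, 0, e] \<in> factorizations [a1, a2, a3] (e*a3)" "[u, v, 0] \<in> factorizations [a1, a2, a3] (e*a3)"
      using rel3 by (auto simp: factorizations_3)
    show "z = [0, 0, e]" if adj: "nabla (e*a3) [0, 0, e] z" for z
    proof -
      obtain z1 z2 z3 where "z = [z1, z2, z3]"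
        using adj by (auto simp: nabla_adj_def factorizations_3)
      with adj isolated3 show ?thesis
        by (auto simp: nabla_adj_3)
    qed
  qed (use e_pos \<open>0 < a3\<close> in auto)
  ultimately show "b \<in> Betti [a1, a2, a3]" if "b \<in> {d*a2, e*a3}" for b
    using that by blast
qed

end

lemma nat_combination_if_ge:
  fixes q k n :: nat
  assumes "coprime k q" "0 < q" "(q - 1)*k \<le> n"
  shows "\<exists>u v. n = u*q + v*k"
proof -
  obtain k' where k': "[k*k' = 1] (mod q)"
    using cong_solve_coprime_nat[OF assms(1)] by auto
  define v where "v = (k'*n) mod q"
  have "[v*k = n] (mod q)"
  proof -
    have "[v*k = (k*k')*n] (mod q)"
      by (simp add: v_def cong_def mod_mult_right_eq ac_simps)
    also have "[(k*k')*n = 1*n] (mod q)"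
      using k' by (rule cong_scalar_right)
    finally show ?thesis by simp
  qed
  moreover have "v*k \<le> n"
  proof -
    have "v < q"
      using assms(2) by (simp add: v_def)
    then have "v \<le> q - 1"
      by simp
    then show ?thesis
      using assms(3) by (meson le_trans mult_le_mono1)
  qed
  ultimately have "q dvd n - v*k"
    by (metis cong_sym cong_altdef_nat)
  then obtain u where "n - v*k = q*u" ..
  with \<open>v*k \<le> n\<close> have "n = u*q + v*k"
    by (metis mult.commute le_add_diff_inverse2)
  then show ?thesis
    by blast
qed

lemma normal_forms_incongruent_pq:
  fixes p q k b :: nat
  assumes "coprime k q" "coprime b p" "0 < p" "x2 < q" "x3 < p" "y2 < q" "y3 < p"
    and cong: "[x2*(p*k) + x3*b = y2*(p*k) + y3*b] (mod p*q)"
  shows "x2 = y2 \<and> x3 = y3"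
proof -
  have "[x2*(p*k) + x3*b = y2*(p*k) + y3*b] (mod p)"
    using cong by (rule cong_modulus_mult_nat)
  then have "[x3*b = y3*b] (mod p)"
    by (simp add: cong_def mult.left_commute[of _ p])
  then have "x3 = y3"
    using assms(2,5,7) by (simp add: cong_mult_rcancel_nat cong_less_modulus_unique_nat)
  with cong have "[p*(x2*k) = p*(y2*k)] (mod p*q)"
    by (simp add: cong_add_rcancel_nat mult.left_commute)
  then have "[x2*k = y2*k] (mod q)"
    using \<open>0 < p\<close> by (simp add: cong_def mod_mult_mult1)
  then have "x2 = y2"
    using assms(1,4,6) by (simp add: cong_mult_rcancel_nat cong_less_modulus_unique_nat)
  with \<open>x3 = y3\<close> show ?thesis
    by simp
qed

lemma factorization_q_pk_unique:
  fixes p q k b :: nat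
  assumes "coprime k q" "coprime b p" "0 < p" "0 < k" "(q - 1)*k < b" "0 < y2"
    and eq: "y1*(p*q) + y2*(p*k) + y3*b = q*(p*k)"
  shows "y1 = 0 \<and> y2 = q \<and> y3 = 0"
proof -
  have "p dvd y3*b"
    using eq by (metis dvd_add_right_iff dvd_triv_left mult.left_commute dvd_add)
  then have "p dvd y3"
    using assms(2) by (simp add: coprime_commute coprime_dvd_mult_left_iff)
  have "y3 = 0"
  proof (rule ccontr)
    assume "y3 \<noteq> 0"
    with \<open>p dvd y3\<close> have "p*b \<le> y3*b"
      by (simp add: dvd_imp_le)
    moreover have "p*k \<le> y2*(p*k)"
      using \<open>0 < y2\<close> by simp
    ultimately have "p*b + p*k \<le> q*(p*k)"
      using eq by linarith
    then have "p*b \<le> p*((q - 1)*k)"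
      by (simp add: algebra_simps diff_mult_distrib)
    with assms(3,5) show False
      by simp
  qed
  with eq have "p*(y1*q + y2*k) = p*(q*k)"
    by (simp add: algebra_simps)
  with \<open>0 < p\<close> have eq': "y1*q + y2*k = q*k"
    by simp
  then have "q dvd y2*k"
    by (metis dvd_add_right_iff dvd_triv_left dvd_triv_right)
  then have "q dvd y2"
    using assms(1) by (simp add: coprime_commute coprime_dvd_mult_left_iff)
  moreover have "y2 \<le> q"
    using eq' \<open>0 < k\<close> by (metis le_add2 mult_le_cancel2)
  ultimately have "y2 = q"
    using \<open>0 < y2\<close> by (simp add: dvd_imp_le le_antisym)
  with eq' \<open>0 < y2\<close> \<open>y3 = 0\<close> show ?thesis
    by simp
qed

lemma factorization_pb_unique:
  fixes p q k b :: nat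
  assumes "coprime b p" "0 < q" "0 < k" "0 < b" "0 < y3"
    and eq: "y1*(p*q) + y2*(p*k) + y3*b = p*b"
  shows "y1 = 0 \<and> y2 = 0 \<and> y3 = p"
proof -
  have "p dvd y3*b"
    using eq by (metis dvd_add_right_iff dvd_triv_left mult.left_commute dvd_add)
  then have "p dvd y3"
    using assms(1) by (simp add: coprime_commute coprime_dvd_mult_left_iff)
  then have "p \<le> y3"
    using \<open>0 < y3\<close> by (simp add: dvd_imp_le)
  moreover have "y3 \<le> p"
    using eq \<open>0 < b\<close> by (metis le_add2 mult_le_cancel2)
  ultimately have "y3 = p"
    by simp
  with eq assms(2,3,5) show ?thesis
    by simp
qed

lemma Betti_pq_pk:
  fixes p q k b :: nat
  assumes "0 < p" "0 < q" "0 < k" "coprime k q" "coprime b p" "(q - 1)*k < b"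
  shows "Betti [p*q, p*k, b] = {q*(p*k), p*b}"
proof -
  obtain u v where uv: "b = u*q + v*k"
    using nat_combination_if_ge[OF assms(4,2)] assms(6) by fastforce
  interpret two_relation_semigroup "p*q" "p*k" b k q p u v
  proof
    show "k*(p*q) = q*(p*k)" "p*b = u*(p*q) + v*(p*k)"
      by (simp_all add: uv algebra_simps)
    show "0 < q" "0 < p" "0 < p*q"
      using assms(1,2) by simp_all
    show "x2 = y2 \<and> x3 = y3" if "x2 < q" "x3 < p" "y2 < q" "y3 < p"
      "[x2*(p*k) + x3*b = y2*(p*k) + y3*b] (mod p*q)" for x2 x3 y2 y3
      using normal_forms_incongruent_pq[OF assms(4,5,1) that] .
  qed
  have "0 < b"
    using assms(6) by simp
  show ?thesis
  proof (rule Betti_eq)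
    show "y1 = 0 \<and> y2 = q \<and> y3 = 0" if "y1*(p*q) + y2*(p*k) + y3*b = q*(p*k)" "0 < y2"
      for y1 y2 y3
      using factorization_q_pk_unique[OF assms(4,5,1,3,6) that(2,1)] .
    show "y1 = 0 \<and> y2 = 0 \<and> y3 = p" if "y1*(p*q) + y2*(p*k) + y3*b = p*b" "0 < y3"
      for y1 y2 y3
      using factorization_pb_unique[OF assms(5,2,3) \<open>0 < b\<close> that(2,1)] .
  qed (use assms(1,3) \<open>0 < b\<close> in simp_all)
qed

lemma coprime_3_if_not_dvd: "\<not> 3 dvd n \<Longrightarrow> coprime n (3::nat)"
  using prime_imp_coprime[of "3::nat" n] by (simp add: coprime_commute)

theorem theorem4:
  fixes \<alpha> :: nat
  shows "(\<forall>m::nat. odd m \<and> m > 6*\<alpha>+2 \<longrightarrow>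
            Betti [6, 6*\<alpha>+2, m] = {18*\<alpha>+6, 2*m})
       \<and> (\<forall>n::nat. \<not> 3 dvd n \<and> n > 6*\<alpha>+3 \<longrightarrow>
            Betti [6, 6*\<alpha>+3, n] = {12*\<alpha>+6, 3*n})
       \<and> (\<forall>p::nat. odd p \<and> p > 6*\<alpha>+4 \<longrightarrow>
            Betti [6, 6*\<alpha>+4, p] = {18*\<alpha>+12, 2*p})"
proof (intro conjI allI impI)
  fix m :: nat
  assume "odd m \<and> m > 6*\<alpha>+2"
  moreover have "coprime (3*\<alpha>+1) 3"
    by (rule coprime_3_if_not_dvd) presburger
  ultimately have "Betti [2*3, 2*(3*\<alpha>+1), m] = {3*(2*(3*\<alpha>+1)), 2*m}"
    by (intro Betti_pq_pk) simp_all
  then show "Betti [6, 6*\<alpha>+2, m] = {18*\<alpha>+6, 2*m}"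
    by (simp add: algebra_simps numeral_eq_Suc)
next
  fix n :: nat
  assume "\<not> 3 dvd n \<and> n > 6*\<alpha>+3"
  then have "Betti [3*2, 3*(2*\<alpha>+1), n] = {2*(3*(2*\<alpha>+1)), 3*n}"
    by (intro Betti_pq_pk) (simp_all add: coprime_3_if_not_dvd)
  then show "Betti [6, 6*\<alpha>+3, n] = {12*\<alpha>+6, 3*n}"
    by (simp add: algebra_simps numeral_eq_Suc)
next
  fix p :: nat
  assume "odd p \<and> p > 6*\<alpha>+4"
  moreover have "coprime (3*\<alpha>+2) 3"
    by (rule coprime_3_if_not_dvd) presburger
  ultimately have "Betti [2*3, 2*(3*\<alpha>+2), p] = {3*(2*(3*\<alpha>+2)), 2*p}"
    by (intro Betti_pq_pk) simp_all
  then show "Betti [6, 6*\<alpha>+4, p] = {18*\<alpha>+12, 2*p}"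
    by (simp add: algebra_simps numeral_eq_Suc)
qed

end
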